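(* Let $G$ be a neighborhood unit square graph with $V(G)\ne\emptyset$. Let $X$ be the set of vertices $v\in V(G)$ for which there exist $\ell\ge4$ and distinct vertices $w_1,\dots,w_\ell\in V(G)\setminus\{v\}$ such that $vw_i\notin E(G)$ for all $i\in[\ell]$ and $G[\{w_1,\dots,w_\ell\}]\cong C_\ell$. Then $X\ne V(G)$.
   Context: A neighborhood unit square graph is a graph $G$ admitting a map $f\colon V(G)\to[-1,1]^2$ such that for distinct $v,w$, $vw\in E(G)$ iff $\|f(v)-f(w)\|_\infty\le1$. $C_\ell$ is the cycle of length $\ell$. *)

theory Defs
  imports "HOL-Analysis.Analysis"
begin

definition simple_graph :: "'a set \<Rightarrow> ('a \<Rightarrow> 'a \<Rightarrow> bool) \<Rightarrow> bool" where
  "simple_graph V E \<longleftrightarrow> finite V \<and> (\<forall>v w. E v w \<longrightarrow> v \<in> V \<and> w \<in> V)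
     \<and> (\<forall>v w. E v w \<longrightarrow> E w v) \<and> (\<forall>v. \<not> E v v)"

definition nus_graph :: "'a set \<Rightarrow> ('a \<Rightarrow> 'a \<Rightarrow> bool) \<Rightarrow> bool" where
  "nus_graph V E \<longleftrightarrow> simple_graph V E \<and>
     (\<exists>f :: 'a \<Rightarrow> real \<times> real.
        (\<forall>v\<in>V. fst (f v) \<in> {-1..1} \<and> snd (f v) \<in> {-1..1}) \<and>
        (\<forall>v\<in>V. \<forall>w\<in>V. v \<noteq> w \<longrightarrow>
           (E v w \<longleftrightarrow> max \<bar>fst (f v) - fst (f w)\<bar> \<bar>snd (f v) - snd (f w)\<bar> \<le> 1)))"

definition induced_cycle :: "('a \<Rightarrow> 'a \<Rightarrow> bool) \<Rightarrow> 'a set \<Rightarrow> nat \<Rightarrow> bool" where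
  "induced_cycle E W l \<longleftrightarrow>
     (\<exists>g. bij_betw g {..<l} W \<and>
        (\<forall>i<l. \<forall>j<l. E (g i) (g j) \<longleftrightarrow> (i \<noteq> j \<and> (j = (i + 1) mod l \<or> i = (j + 1) mod l))))"

end

theory Submission
  imports Defs
begin

text \<open>Fix a representation and a vertex v whose first coordinate a is minimal in absolute
value; after reflecting, a \<ge> 0. In an induced cycle W of length at least 4 every vertex is the
middle of an induced path p-u-q inside W. Let i be the rightmost vertex of W. If its first
coordinate is at most -a, all of W lies in a vertical strip of width 1, and the path around the
topmost vertex of W has adjacent ends. Otherwise the path p-i-q has both ends within horizontal
distance 1 of v, so if W avoids the neighbourhood of v, then p and q are both vertically far from
v, on the same side of it, and hence adjacent.\<close>

lemma induced_cycle_finite: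
  assumes "induced_cycle E W l"
  shows "finite W" "card W = l"
proof -
  from assms obtain g where "bij_betw g {..<l} W" unfolding induced_cycle_def by blast
  then show "finite W" "card W = l"
    using bij_betw_finite bij_betw_same_card by fastforce+
qed

lemma induced_cycle_nonadjacent_neighbours:
  assumes cycle: "induced_cycle E W l" and "4 \<le> l" and "u \<in> W"
  obtains p q where "p \<in> W" "q \<in> W" "p \<noteq> q" "E u p" "E u q" "\<not> E p q"
proof -
  from cycle obtain g where bij: "bij_betw g {..<l} W" and
    adj: "\<And>i j. i < l \<Longrightarrow> j < l \<Longrightarrow>
            E (g i) (g j) \<longleftrightarrow> i \<noteq> j \<and> (j = (i + 1) mod l \<or> i = (j + 1) mod l)"
    unfolding induced_cycle_def by blast
  from bij \<open>u \<in> W\<close> obtain i where i: "i < l" "u = g i"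
    by (metis bij_betw_iff_bijections lessThan_iff)
  define j where "j = (i + 1) mod l"
  define k where "k = (i + l - 1) mod l"
  have jk: "j < l" "k < l" using \<open>4 \<le> l\<close> by (simp_all add: j_def k_def)
  have "i \<noteq> j" "i \<noteq> k" "j \<noteq> k" "k \<noteq> (j + 1) mod l" "i = (k + 1) mod l"
    using \<open>4 \<le> l\<close> i(1) unfolding j_def k_def by (auto simp: mod_if)
  then have "E u (g j)" "E u (g k)" "\<not> E (g j) (g k)"
    using adj[OF i(1) jk(1)] adj[OF i(1) jk(2)] adj[OF jk] i(2) j_def by auto
  moreover have "g j \<noteq> g k"
    using bij jk \<open>j \<noteq> k\<close> by (auto simp: bij_betw_def dest: inj_onD)
  moreover have "g j \<in> W" "g k \<in> W" using bij jk bij_betw_apply by fastforce+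
  ultimately show thesis using that by blast
qed

lemma finite_obtains_arg_max:
  fixes h :: "'a \<Rightarrow> 'b::linorder"
  assumes "finite A" "A \<noteq> {}"
  obtains a where "a \<in> A" "\<And>b. b \<in> A \<Longrightarrow> h b \<le> h a"
proof -
  from assms have "Max (h ` A) \<in> h ` A" by simp
  then obtain a where "a \<in> A" "Max (h ` A) = h a" by blast
  moreover have "h b \<le> Max (h ` A)" if "b \<in> A" for b
    using assms(1) that by simp
  ultimately show thesis using that by simp
qed

locale square_representation =
  fixes V :: "'a set" and E :: "'a \<Rightarrow> 'a \<Rightarrow> bool" and f :: "'a \<Rightarrow> real \<times> real"
  assumes in_square: "u \<in> V \<Longrightarrow> \<bar>fst (f u)\<bar> \<le> 1 \<and> \<bar>snd (f u)\<bar> \<le> 1"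
    and adjacent_iff: "u \<in> V \<Longrightarrow> w \<in> V \<Longrightarrow> u \<noteq> w \<Longrightarrow>
      E u w \<longleftrightarrow> \<bar>fst (f u) - fst (f w)\<bar> \<le> 1 \<and> \<bar>snd (f u) - snd (f w)\<bar> \<le> 1"
    and irrefl: "\<not> E u u"
begin

lemma adjacent_close:
  assumes "u \<in> V" "w \<in> V" "E u w"
  shows "\<bar>fst (f u) - fst (f w)\<bar> \<le> 1" "\<bar>snd (f u) - snd (f w)\<bar> \<le> 1"
proof -
  from assms(3) have "u \<noteq> w" using irrefl by blast
  with assms show "\<bar>fst (f u) - fst (f w)\<bar> \<le> 1" "\<bar>snd (f u) - snd (f w)\<bar> \<le> 1"
    using adjacent_iff by blast+
qed

lemma reflect_first: "square_representation V E (\<lambda>u. (- fst (f u), snd (f u)))"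
proof unfold_locales
  fix u w assume "u \<in> V" "w \<in> V" "u \<noteq> w"
  moreover have "\<bar>- fst (f u) - - fst (f w)\<bar> = \<bar>fst (f u) - fst (f w)\<bar>" by linarith
  ultimately show "E u w \<longleftrightarrow> \<bar>fst (- fst (f u), snd (f u)) - fst (- fst (f w), snd (f w))\<bar> \<le> 1 \<and>
      \<bar>snd (- fst (f u), snd (f u)) - snd (- fst (f w), snd (f w))\<bar> \<le> 1"
    using adjacent_iff by simp
qed (use in_square irrefl in auto)

lemma ex_representation_nonneg_min_abs:
  assumes "finite V" "V \<noteq> {}"
  obtains f' v where "square_representation V E f'" "v \<in> V" "0 \<le> fst (f' v)"
    "\<And>u. u \<in> V \<Longrightarrow> fst (f' v) \<le> \<bar>fst (f' u)\<bar>"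
proof -
  define v where "v = arg_min_on (\<lambda>u. \<bar>fst (f u)\<bar>) V"
  have v: "v \<in> V" "\<And>u. u \<in> V \<Longrightarrow> \<bar>fst (f v)\<bar> \<le> \<bar>fst (f u)\<bar>"
    using arg_min_if_finite(1) arg_min_least assms unfolding v_def by fastforce+
  show thesis
  proof (cases "0 \<le> fst (f v)")
    case True
    with v show thesis using that[of f v] square_representation_axioms by auto
  next
    case False
    with v show thesis using that[of _ v] reflect_first by auto
  qed
qed

lemma no_induced_paths_in_vertical_strip:
  assumes "W \<subseteq> V" "finite W" "W \<noteq> {}"
    and strip: "\<And>u w. u \<in> W \<Longrightarrow> w \<in> W \<Longrightarrow> \<bar>fst (f u) - fst (f w)\<bar> \<le> 1"
    and paths: "\<And>u. u \<in> W \<Longrightarrow> \<exists>p\<in>W. \<exists>q\<in>W. p \<noteq> q \<and> E u p \<and> E u q \<and> \<not> E p q"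
  shows False
proof -
  obtain k where k: "k \<in> W" "\<And>u. u \<in> W \<Longrightarrow> snd (f u) \<le> snd (f k)"
    using finite_obtains_arg_max[of W "\<lambda>u. snd (f u)"] assms by blast
  from paths[OF \<open>k \<in> W\<close>] obtain p q where pq: "p \<in> W" "q \<in> W" "p \<noteq> q" "E k p" "E k q" "\<not> E p q"
    by blast
  have "\<bar>snd (f k) - snd (f p)\<bar> \<le> 1" "\<bar>snd (f k) - snd (f q)\<bar> \<le> 1"
    using adjacent_close pq k \<open>W \<subseteq> V\<close> by blast+
  moreover have "snd (f p) \<le> snd (f k)" "snd (f q) \<le> snd (f k)" using k pq by auto
  ultimately have "\<bar>snd (f p) - snd (f q)\<bar> \<le> 1" by linarith
  then have "E p q" using adjacent_iff strip pq \<open>W \<subseteq> V\<close> by blast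
  with \<open>\<not> E p q\<close> show False ..
qed

lemma no_anticycle_at_min_abs:
  assumes v: "v \<in> V" "0 \<le> fst (f v)" "\<And>u. u \<in> V \<Longrightarrow> fst (f v) \<le> \<bar>fst (f u)\<bar>"
    and W: "W \<subseteq> V - {v}" "\<And>u. u \<in> W \<Longrightarrow> \<not> E v u" "finite W" "W \<noteq> {}"
    and paths: "\<And>u. u \<in> W \<Longrightarrow> \<exists>p\<in>W. \<exists>q\<in>W. p \<noteq> q \<and> E u p \<and> E u q \<and> \<not> E p q"
  shows False
proof -
  obtain i where i: "i \<in> W" "\<And>u. u \<in> W \<Longrightarrow> fst (f u) \<le> fst (f i)"
    using finite_obtains_arg_max[of W "\<lambda>u. fst (f u)"] W by blast
  show False
  proof (cases "fst (f i) \<le> - fst (f v)")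
    case True
    have "\<bar>fst (f u) - fst (f w)\<bar> \<le> 1" if "u \<in> W" "w \<in> W" for u w
    proof -
      have "u \<in> V" "w \<in> V" using that W(1) by auto
      then show ?thesis
        using i(2)[OF that(1)] i(2)[OF that(2)] in_square[of u] in_square[of w] True v(2)
        by (simp add: abs_le_iff)
    qed
    then show False using no_induced_paths_in_vertical_strip W paths by blast
  next
    case False
    then have "fst (f v) \<le> fst (f i)" using v(3)[of i] i(1) W(1) by auto
    from paths[OF \<open>i \<in> W\<close>] obtain p q where pq: "p \<in> W" "q \<in> W" "p \<noteq> q" "E i p" "E i q" "\<not> E p q"
      by blast
    have V: "i \<in> V" "p \<in> V" "q \<in> V" "p \<noteq> v" "q \<noteq> v" using i(1) pq W(1) by auto
    have "\<bar>fst (f i) - fst (f p)\<bar> \<le> 1" "\<bar>fst (f i) - fst (f q)\<bar> \<le> 1"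
      using adjacent_close V pq by blast+
    moreover have "fst (f p) \<le> fst (f i)" "fst (f q) \<le> fst (f i)" "\<bar>fst (f i)\<bar> \<le> 1"
      using i pq in_square V by auto
    ultimately have close: "\<bar>fst (f p) - fst (f q)\<bar> \<le> 1"
      "\<bar>fst (f v) - fst (f p)\<bar> \<le> 1" "\<bar>fst (f v) - fst (f q)\<bar> \<le> 1"
      using \<open>fst (f v) \<le> fst (f i)\<close> v(2) by (simp_all add: abs_le_iff)
    \<comment> \<open>Being far from v in the second coordinate, both p and q lie in the part of [-1,1]
      on the far side of snd (f v), an interval of length less than 1.\<close>
    have "\<not> \<bar>snd (f v) - snd (f p)\<bar> \<le> 1" "\<not> \<bar>snd (f v) - snd (f q)\<bar> \<le> 1"
      using adjacent_iff[of v p] adjacent_iff[of v q] close V v(1) W(2) pq(1,2) by auto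
    then have "\<bar>snd (f p) - snd (f q)\<bar> \<le> 1"
      using in_square[of v] in_square[of p] in_square[of q] v(1) V by (simp add: abs_le_iff) linarith
    then have "E p q" using adjacent_iff close V pq by blast
    with \<open>\<not> E p q\<close> show False ..
  qed
qed

end

lemma nus_graph_square_representation:
  assumes "nus_graph V E"
  obtains f where "square_representation V E f"
proof -
  from assms have "simple_graph V E" unfolding nus_graph_def by blast
  then have irrefl: "\<not> E u u" for u unfolding simple_graph_def by blast
  from assms obtain f :: "'a \<Rightarrow> real \<times> real" where
    in_square: "\<forall>v\<in>V. fst (f v) \<in> {-1..1} \<and> snd (f v) \<in> {-1..1}" and
    adjacent_iff: "\<forall>v\<in>V. \<forall>w\<in>V. v \<noteq> w \<longrightarrow>
       (E v w \<longleftrightarrow> max \<bar>fst (f v) - fst (f w)\<bar> \<bar>snd (f v) - snd (f w)\<bar> \<le> 1)"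
    unfolding nus_graph_def by (elim conjE exE) (rule that)
  show thesis
  proof (rule that, unfold_locales)
    show "\<bar>fst (f u)\<bar> \<le> 1 \<and> \<bar>snd (f u)\<bar> \<le> 1" if "u \<in> V" for u
      using in_square that by (simp add: abs_le_iff)
    show "E u w \<longleftrightarrow> \<bar>fst (f u) - fst (f w)\<bar> \<le> 1 \<and> \<bar>snd (f u) - snd (f w)\<bar> \<le> 1"
      if "u \<in> V" "w \<in> V" "u \<noteq> w" for u w
      using adjacent_iff that by simp
  qed (rule irrefl)
qed

theorem mainTheorem18:
  fixes V :: "'a set" and E :: "'a \<Rightarrow> 'a \<Rightarrow> bool"
  assumes "nus_graph V E" and "V \<noteq> {}"
  defines "X \<equiv> {v \<in> V. \<exists>l \<ge> 4. \<exists>w :: nat \<Rightarrow> 'a.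
              inj_on w {1..l} \<and> w ` {1..l} \<subseteq> V - {v} \<and>
              (\<forall>i\<in>{1..l}. \<not> E v (w i)) \<and> induced_cycle E (w ` {1..l}) l}"
  shows "X \<noteq> V"
proof
  assume "X = V"
  have "finite V" using assms(1) unfolding nus_graph_def simple_graph_def by blast
  obtain f0 where "square_representation V E f0"
    using nus_graph_square_representation[OF assms(1)] .
  then obtain f v where rep: "square_representation V E f" and v: "v \<in> V" "0 \<le> fst (f v)"
    "\<And>u. u \<in> V \<Longrightarrow> fst (f v) \<le> \<bar>fst (f u)\<bar>"
    using square_representation.ex_representation_nonneg_min_abs \<open>finite V\<close> assms(2) by blast
  from \<open>v \<in> V\<close> \<open>X = V\<close> obtain l w where "4 \<le> l" "w ` {1..l} \<subseteq> V - {v}"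
    "\<forall>i\<in>{1..l}. \<not> E v (w i)" and cycle: "induced_cycle E (w ` {1..l}) l"
    unfolding X_def by blast
  moreover have "finite (w ` {1..l})" "w ` {1..l} \<noteq> {}"
    using induced_cycle_finite[OF cycle] \<open>4 \<le> l\<close> by auto
  moreover have "\<exists>p\<in>w ` {1..l}. \<exists>q\<in>w ` {1..l}. p \<noteq> q \<and> E u p \<and> E u q \<and> \<not> E p q"
    if "u \<in> w ` {1..l}" for u
    using induced_cycle_nonadjacent_neighbours[OF cycle \<open>4 \<le> l\<close> that] by metis
  ultimately show False
    using square_representation.no_anticycle_at_min_abs[OF rep v, of "w ` {1..l}"] by blast
qed

end
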